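(* Let $I_0$ be an interval and let $\{f_k\}_{k\ge0}$ be a $C^1$-uniformly equicontinuous and $C^1$-uniformly bounded sequence of $C^1$ maps $f_k:I_0\to I_0$ with $p=\sup_k\#\mathcal{C}_k<\infty$. Assume that for Lebesgue almost every $x\in I_0$, $$\liminf_{n\to\infty}\frac1n\log|Df^n(x)|\ge\lambda>0.$$ Then, given $\gamma>0$, there exists $\varepsilon>0$ such that for Lebesgue almost every $x\in I_0$, $$\limsup_{n\to\infty}\frac1n\sum_{j=0}^{n-1}\chi_{V_\varepsilon\mathcal{C}_j}(f^j(x))<\gamma.$$
   Context: $\mathcal{C}_k$ is the set of critical points of $f_k$; $f^j=f_{j-1}\circ\cdots\circ f_0$, $f^0=\mathrm{id}$. $V_\varepsilon\mathcal{C}_k$ is the union of the balls $B(c,\varepsilon)$ over $c\in\mathcal{C}_k$; $\chi$ is the indicator function. $C^1$-uniformly equicontinuous: for every $\zeta>0$ there is $\varepsilon>0$ such that $|x-y|<\varepsilon$ implies $|f_k(x)-f_k(y)|<\zeta$ and $|Df_k(x)-Df_k(y)|<\zeta$ for all $k$. $C^1$-uniformly bounded: there is $\Gamma>0$ with $|f_k(x)|,|Df_k(x)|\le\Gamma$ for all $x,k$. *)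

theory Defs
  imports "HOL-Analysis.Analysis"
begin

fun iter :: "(nat \<Rightarrow> 'a \<Rightarrow> 'a) \<Rightarrow> nat \<Rightarrow> 'a \<Rightarrow> 'a" where
  "iter f 0 = id"
| "iter f (Suc n) = f n \<circ> iter f n"

text \<open>Derivative of f^n at x (chain rule): Df^n(x) = prod_{j<n} Df_j(f^j(x)).\<close>
definition iter_deriv :: "(nat \<Rightarrow> real \<Rightarrow> real) \<Rightarrow> (nat \<Rightarrow> real \<Rightarrow> real) \<Rightarrow> nat \<Rightarrow> real \<Rightarrow> real" where
  "iter_deriv f Df n x = (\<Prod>j<n. Df j (iter f j x))"

definition crit :: "real set \<Rightarrow> (nat \<Rightarrow> real \<Rightarrow> real) \<Rightarrow> nat \<Rightarrow> real set" where
  "crit I0 Df k = {x \<in> I0. Df k x = 0}"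

definition nbhd :: "real \<Rightarrow> real set \<Rightarrow> real set" where
  "nbhd \<epsilon> C = (\<Union>c\<in>C. ball c \<epsilon>)"

end

theory Submission
  imports Defs
begin

text \<open>If the derivatives along an orbit are bounded by \<open>G \<ge> 1\<close> and their products eventually
  exceed 1, then \<open>\<Sum>j<n. ln \<bar>Df j (f\<^sup>j x)\<bar> \<ge> 0\<close>: every visit to a region where \<open>\<bar>Df j\<bar> \<le> e\<^sup>-\<^sup>K\<close>
  costs at least \<open>K\<close> and every other step gains at most \<open>ln G\<close>, so such visits have frequency at
  most \<open>ln G / K\<close>. By uniform equicontinuity of the derivatives, \<open>\<bar>Df j\<bar> \<le> e\<^sup>-\<^sup>K\<close> on a uniform
  \<open>\<epsilon>\<close>-neighbourhood of the critical set, and \<open>K\<close> may be taken as large as we like.\<close>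

lemma iter_mem:
  assumes "\<And>k. f k ` I0 \<subseteq> I0" and "x \<in> I0"
  shows "iter f j x \<in> I0"
  using assms by (induction j) auto

lemma card_small_factors_le:
  fixes a :: "nat \<Rightarrow> real"
  assumes S: "S \<subseteq> {..<n}" and G: "1 \<le> G"
    and bounded: "\<And>j. j < n \<Longrightarrow> \<bar>a j\<bar> \<le> G"
    and small: "\<And>j. j \<in> S \<Longrightarrow> \<bar>a j\<bar> \<le> exp (- K)"
    and prod: "1 \<le> \<bar>\<Prod>j<n. a j\<bar>"
  shows "real (card S) * K \<le> real n * ln G"
proof -
  have "1 \<le> (\<Prod>j<n. \<bar>a j\<bar>)"
    using prod by (simp add: abs_prod)
  also have "\<dots> \<le> (\<Prod>j<n. if j \<in> S then exp (- K) else G)"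
    using bounded small S by (intro prod_mono) auto
  also have "\<dots> = exp (- K) ^ card S * G ^ card ({..<n} - S)"
    using S by (simp add: prod.If_cases Int_absorb1 Diff_eq [symmetric])
  also have "\<dots> \<le> exp (- K) ^ card S * G ^ n"
    using G card_mono [OF finite_lessThan Diff_subset, of n S]
    by (intro mult_left_mono power_increasing) auto
  also have "\<dots> = G ^ n / exp K ^ card S"
    by (simp add: exp_minus power_inverse field_simps)
  also have "\<dots> = exp (real n * ln G - real (card S) * K)"
    using G by (simp add: exp_diff exp_of_nat_mult)
  finally show ?thesis
    by simp
qed

lemma limsup_frequency_small_factors_le:
  fixes a :: "nat \<Rightarrow> real" and A :: "nat \<Rightarrow> 'a set" and y :: "nat \<Rightarrow> 'a"
  assumes G: "1 \<le> G" and K: "0 < K"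
    and bounded: "\<And>j. \<bar>a j\<bar> \<le> G"
    and small: "\<And>j. y j \<in> A j \<Longrightarrow> \<bar>a j\<bar> \<le> exp (- K)"
    and expanding: "\<forall>\<^sub>F n in sequentially. 1 \<le> \<bar>\<Prod>j<n. a j\<bar>"
  shows "limsup (\<lambda>n. ereal ((\<Sum>j<n. indicator (A j) (y j)) / real n)) \<le> ereal (ln G / K)"
proof (rule Limsup_bounded)
  show "\<forall>\<^sub>F n in sequentially. ereal ((\<Sum>j<n. indicator (A j) (y j)) / real n) \<le> ereal (ln G / K)"
    using expanding eventually_gt_at_top [of 0]
  proof eventually_elim
    case (elim n)
    define S where "S = {j \<in> {..<n}. y j \<in> A j}"
    have "(\<Sum>j<n. indicator (A j) (y j)) = real (card S)"
      unfolding S_def indicator_def by (simp add: sum.If_cases Int_def conj_commute)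
    moreover have "real (card S) * K \<le> real n * ln G"
      using G bounded small elim(1) by (intro card_small_factors_le) (auto simp: S_def)
    ultimately show ?case
      using K elim(2) by (simp add: field_simps)
  qed
qed

lemma eventually_one_less_abs_if_exponent_pos:
  fixes b :: "nat \<Rightarrow> real"
  assumes "0 < liminf (\<lambda>n. ereal (ln \<bar>b n\<bar> / real n))"
  shows "\<forall>\<^sub>F n in sequentially. 1 < \<bar>b n\<bar>"
  using less_LiminfD [OF assms]
proof eventually_elim
  case (elim n)
  then have "0 < ln \<bar>b n\<bar>"
    by (simp add: zero_less_divide_iff)
  moreover from this have "0 < \<bar>b n\<bar>"
    by (cases "b n = 0") auto
  ultimately show ?case
    by (rule ln_gt_zero_imp_gt_one)
qed

lemma abs_deriv_less_near_crit:
  assumes close: "\<forall>x\<in>I0. \<forall>y\<in>I0. \<bar>x - y\<bar> < \<epsilon> \<longrightarrow> \<bar>Df k x - Df k y\<bar> < \<delta>"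
    and y: "y \<in> I0" "y \<in> nbhd \<epsilon> (crit I0 Df k)"
  shows "\<bar>Df k y\<bar> < \<delta>"
proof -
  obtain c where "c \<in> I0" "Df k c = 0" "\<bar>y - c\<bar> < \<epsilon>"
    using y(2) by (auto simp: nbhd_def crit_def dist_real_def abs_minus_commute)
  then show ?thesis
    using close y(1) by fastforce
qed

lemma limsup_frequency_near_crit_le:
  fixes f Df :: "nat \<Rightarrow> real \<Rightarrow> real"
  assumes maps: "\<And>k. f k ` I0 \<subseteq> I0" and x: "x \<in> I0"
    and G: "1 \<le> G" and bounded: "\<And>k y. y \<in> I0 \<Longrightarrow> \<bar>Df k y\<bar> \<le> G"
    and K: "0 < K"
    and close: "\<forall>k. \<forall>x\<in>I0. \<forall>y\<in>I0. \<bar>x - y\<bar> < \<epsilon> \<longrightarrow> \<bar>Df k x - Df k y\<bar> < exp (- K)"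
    and exponent: "0 < liminf (\<lambda>n. ereal (ln \<bar>iter_deriv f Df n x\<bar> / real n))"
  shows "limsup (\<lambda>n. ereal ((\<Sum>j<n. indicator (nbhd \<epsilon> (crit I0 Df j)) (iter f j x)) / real n))
    \<le> ereal (ln G / K)"
proof (rule limsup_frequency_small_factors_le [OF G K])
  have orbit: "iter f j x \<in> I0" for j
    using maps x by (rule iter_mem)
  then show "\<bar>Df j (iter f j x)\<bar> \<le> G" for j
    by (rule bounded)
  show "\<bar>Df j (iter f j x)\<bar> \<le> exp (- K)" if "iter f j x \<in> nbhd \<epsilon> (crit I0 Df j)" for j
    using abs_deriv_less_near_crit [OF close [THEN spec, of j] orbit that] by simp
  have "\<forall>\<^sub>F n in sequentially. 1 < \<bar>iter_deriv f Df n x\<bar>"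
    using exponent by (rule eventually_one_less_abs_if_exponent_pos)
  then show "\<forall>\<^sub>F n in sequentially. 1 \<le> \<bar>\<Prod>j<n. Df j (iter f j x)\<bar>"
    by (auto simp: iter_deriv_def elim: eventually_mono)
qed

theorem corollary4p4:
  fixes I0 :: "real set" and f Df :: "nat \<Rightarrow> real \<Rightarrow> real" and lam :: real
  assumes interval: "is_interval I0"
    and maps: "\<And>k. f k ` I0 \<subseteq> I0"
    and deriv: "\<And>k x. x \<in> I0 \<Longrightarrow> (f k has_real_derivative Df k x) (at x within I0)"
    and C1: "\<And>k. continuous_on I0 (Df k)"
    and equicont: "\<forall>\<zeta>>0. \<exists>\<epsilon>>0. \<forall>k. \<forall>x\<in>I0. \<forall>y\<in>I0. \<bar>x - y\<bar> < \<epsilon> \<longrightarrow>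
                      \<bar>f k x - f k y\<bar> < \<zeta> \<and> \<bar>Df k x - Df k y\<bar> < \<zeta>"
    and bounded: "\<exists>\<Gamma>>0. \<forall>k. \<forall>x\<in>I0. \<bar>f k x\<bar> \<le> \<Gamma> \<and> \<bar>Df k x\<bar> \<le> \<Gamma>"
    and crit_bound: "\<exists>p::nat. \<forall>k. finite (crit I0 Df k) \<and> card (crit I0 Df k) \<le> p"
    and lam_pos: "lam > 0"
    and expansion: "AE x in lebesgue. x \<in> I0 \<longrightarrow>
        liminf (\<lambda>n. ereal (ln \<bar>iter_deriv f Df n x\<bar> / real n)) \<ge> ereal lam"
  shows "\<forall>\<gamma>>0. \<exists>\<epsilon>>0. AE x in lebesgue. x \<in> I0 \<longrightarrow>
        limsup (\<lambda>n. ereal ((\<Sum>j<n. indicator (nbhd \<epsilon> (crit I0 Df j)) (iter f j x)) / real n))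
          < ereal \<gamma>"
proof (intro allI impI)
  fix \<gamma> :: real
  assume "0 < \<gamma>"
  obtain \<Gamma> where \<Gamma>: "\<forall>k. \<forall>x\<in>I0. \<bar>Df k x\<bar> \<le> \<Gamma>"
    using bounded by blast
  define G where "G = max \<Gamma> 1"
  define K where "K = ln G / \<gamma> + 1"
  have G: "1 \<le> G" and K: "0 < K" and "ln G / K < \<gamma>"
    using \<open>0 < \<gamma>\<close> by (auto simp: G_def K_def field_simps add_pos_nonneg)
  have bounded_G: "\<bar>Df k y\<bar> \<le> G" if "y \<in> I0" for k y
    using \<Gamma> that by (auto simp: G_def intro: max.coboundedI1)
  obtain \<epsilon> where "0 < \<epsilon>"
    and close: "\<forall>k. \<forall>x\<in>I0. \<forall>y\<in>I0. \<bar>x - y\<bar> < \<epsilon> \<longrightarrow> \<bar>Df k x - Df k y\<bar> < exp (- K)"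
    using equicont [rule_format, of "exp (- K)"] by auto
  have "AE x in lebesgue. x \<in> I0 \<longrightarrow>
      limsup (\<lambda>n. ereal ((\<Sum>j<n. indicator (nbhd \<epsilon> (crit I0 Df j)) (iter f j x)) / real n))
        \<le> ereal (ln G / K)"
    using expansion
  proof eventually_elim
    case (elim x)
    with lam_pos have "0 < liminf (\<lambda>n. ereal (ln \<bar>iter_deriv f Df n x\<bar> / real n))"
      if "x \<in> I0"
      using that by (meson ereal_less(2) less_le_trans)
    then show ?case
      using limsup_frequency_near_crit_le [of f I0 x G Df K \<epsilon>] maps G bounded_G K close by blast
  qed
  then show "\<exists>\<epsilon>>0. AE x in lebesgue. x \<in> I0 \<longrightarrow>
      limsup (\<lambda>n. ereal ((\<Sum>j<n. indicator (nbhd \<epsilon> (crit I0 Df j)) (iter f j x)) / real n))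
        < ereal \<gamma>"
    using \<open>ln G / K < \<gamma>\<close>
    by (intro exI [of _ \<epsilon>] conjI \<open>0 < \<epsilon>\<close>) (auto elim!: eventually_mono intro: le_less_trans)
qed

end
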